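(* The monoid $\mathcal{BR}(\mathfrak{S}_n)$ is presented by generators $e_1,\ldots,e_{n-1}$ and $z_1,\ldots,z_{n-1}$ subject to the relations: $e_i^2=e_i$ and $e_ie_j=e_je_i$ for all $i,j$; $z_iz_jz_i=z_jz_iz_j$ for $|i-j|=1$; $z_iz_j=z_jz_i$ for $|i-j|>1$; $e_iz_j=z_je_i$ for all $i,j$; $z_i^2=e_i$; $e_iz_i=z_i$.
   Context: $\mathfrak{C}_n$ is the partition monoid: set partitions of $[2n]$ (top points $1,\dots,n$, bottom points $n+1,\dots,2n$) with concatenation product $I*J$ (identify bottom point $n+i$ of $I$ with top point $i$ of $J$, join blocks transitively, delete the middle points). $I\preceq J$ means each block of $J$ is a union of blocks of $I$. $\mathfrak{S}_n\subseteq\mathfrak{C}_n$ consists of the partitions with all blocks of the form $\{i,n+j\}$; $s_i$ is the simple transposition; $1=\{\{i,n+i\}\}$. A set partition $J$ of $[2n]$ is boxed if $1\preceq J$ and the restriction of $J$ to $[n]$ is linear (all blocks intervals). $\mathcal{BR}(\mathfrak{S}_n)$ is the set of pairs $(I,J)$ with $I\in\mathfrak{S}_n$, $J$ boxed, $I\preceq J$, with product $(I,J)(H,K)=(I*H,J*K)$. Let $b_i$ be obtained from $1$ by merging the blocks $\{i,n+i\}$ and $\{i+1,n+i+1\}$; $e_i=(1,b_i)$ and $z_i=(s_i,b_i)$. *)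

theory Defs
  imports "HOL-Library.Disjoint_Sets"
begin

text \<open>A set partition of [2n] is a set of nonempty pairwise disjoint blocks covering {1..2n}.
Top points are 1..n, bottom points are n+1..2n.\<close>

definition pmon :: "nat \<Rightarrow> nat set set set" where
  "pmon n = {P. partition_on {1..2*n} P}"

definition rel_of :: "nat set set \<Rightarrow> (nat \<times> nat) set" where
  "rel_of P = (\<Union>B\<in>P. B \<times> B)"

text \<open>Concatenation product: the blocks of J are shifted by n, so top point i of J
becomes n+i (identified with the bottom point n+i of I) and bottom point n+i of J
becomes 2n+i.\<close>

definition pmult :: "nat \<Rightarrow> nat set set \<Rightarrow> nat set set \<Rightarrow> nat set set" where
  "pmult n I J =
     (let J' = (\<lambda>B. (\<lambda>x. x + n) ` B) ` J;
          R = (rel_of I \<union> rel_of J')\<^sup>+;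
          mid = {n+1..2*n};
          f = (\<lambda>x. if x > 2*n then x - n else x)
      in {f ` (C - mid) | C. C \<in> {1..3*n} // R \<and> C - mid \<noteq> {}})"

definition refines :: "nat set set \<Rightarrow> nat set set \<Rightarrow> bool" where
  "refines I J \<longleftrightarrow> (\<forall>B\<in>J. \<exists>S\<subseteq>I. B = \<Union>S)"

definition one_p :: "nat \<Rightarrow> nat set set" where
  "one_p n = {{i, n+i} | i. i \<in> {1..n}}"

definition sym_part :: "nat \<Rightarrow> nat set set set" where
  "sym_part n = {P \<in> pmon n. \<forall>B\<in>P. \<exists>i j. i \<in> {1..n} \<and> j \<in> {1..n} \<and> B = {i, n+j}}"

definition s_p :: "nat \<Rightarrow> nat \<Rightarrow> nat set set" where
  "s_p n i = {{k, n + (if k = i then i+1 else if k = i+1 then i else k)} | k. k \<in> {1..n}}"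

definition linear_part :: "nat set set \<Rightarrow> bool" where
  "linear_part P \<longleftrightarrow> (\<forall>B\<in>P. \<exists>a b. B = {a..b})"

definition restrict_part :: "nat set set \<Rightarrow> nat set \<Rightarrow> nat set set" where
  "restrict_part P A = {B \<inter> A | B. B \<in> P \<and> B \<inter> A \<noteq> {}}"

definition boxed :: "nat \<Rightarrow> nat set set \<Rightarrow> bool" where
  "boxed n J \<longleftrightarrow> J \<in> pmon n \<and> refines (one_p n) J \<and> linear_part (restrict_part J {1..n})"

definition BR :: "nat \<Rightarrow> (nat set set \<times> nat set set) set" where
  "BR n = {(I, J). I \<in> sym_part n \<and> boxed n J \<and> refines I J}"

definition bmult :: "nat \<Rightarrow> nat set set \<times> nat set set \<Rightarrow> nat set set \<times> nat set set
                     \<Rightarrow> nat set set \<times> nat set set" where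
  "bmult n x y = (pmult n (fst x) (fst y), pmult n (snd x) (snd y))"

definition b_p :: "nat \<Rightarrow> nat \<Rightarrow> nat set set" where
  "b_p n i = (one_p n - {{i, n+i}, {i+1, n+i+1}}) \<union> {{i, i+1, n+i, n+i+1}}"

datatype gen = E nat | Z nat

definition gens :: "nat \<Rightarrow> gen set" where
  "gens n = {E i | i. 1 \<le> i \<and> i < n} \<union> {Z i | i. 1 \<le> i \<and> i < n}"

fun gen_val :: "nat \<Rightarrow> gen \<Rightarrow> nat set set \<times> nat set set" where
  "gen_val n (E i) = (one_p n, b_p n i)"
| "gen_val n (Z i) = (s_p n i, b_p n i)"

fun eval_word :: "nat \<Rightarrow> gen list \<Rightarrow> nat set set \<times> nat set set" where
  "eval_word n [] = (one_p n, one_p n)"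
| "eval_word n (g # w) = bmult n (gen_val n g) (eval_word n w)"

definition rels :: "nat \<Rightarrow> (gen list \<times> gen list) set" where
  "rels n =
     {([E i, E i], [E i]) | i. 1 \<le> i \<and> i < n}
   \<union> {([E i, E j], [E j, E i]) | i j. 1 \<le> i \<and> i < n \<and> 1 \<le> j \<and> j < n}
   \<union> {([Z i, Z j, Z i], [Z j, Z i, Z j]) | i j. 1 \<le> i \<and> i < n \<and> 1 \<le> j \<and> j < n \<and> (i = j + 1 \<or> j = i + 1)}
   \<union> {([Z i, Z j], [Z j, Z i]) | i j. 1 \<le> i \<and> i < n \<and> 1 \<le> j \<and> j < n \<and> (i > j + 1 \<or> j > i + 1)}
   \<union> {([E i, Z j], [Z j, E i]) | i j. 1 \<le> i \<and> i < n \<and> 1 \<le> j \<and> j < n}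
   \<union> {([Z i, Z i], [E i]) | i. 1 \<le> i \<and> i < n}
   \<union> {([E i, Z i], [Z i]) | i. 1 \<le> i \<and> i < n}"

inductive wcong :: "(gen list \<times> gen list) set \<Rightarrow> gen list \<Rightarrow> gen list \<Rightarrow> bool"
  for R where
  rel: "(l, r) \<in> R \<Longrightarrow> wcong R (u @ l @ v) (u @ r @ v)"
| refl: "wcong R w w"
| sym: "wcong R u v \<Longrightarrow> wcong R v u"
| trans: "wcong R u v \<Longrightarrow> wcong R v w \<Longrightarrow> wcong R u w"

end

theory Submission
  imports Defs "HOL-Combinatorics.Permutations"
begin

(*
  Every word w in the generators carries two invariants: the permutation word_perm w, in which
  z_i acts as the transposition (i i+1) and e_i trivially, and its support word_support w, the
  set of indices occurring in w.  The value of w in BR(S_n) is the pair formed by the partition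
  of that permutation and the boxed partition whose top blocks are the runs of points linked by
  the support; both invariants can be read back from this pair.

  The relations preserve both invariants.  Conversely they rewrite every word into an e-word on
  its support followed by a canonical z-word of its permutation: the e's commute with everything
  and are idempotent, e_i z_i = z_i inserts an e_i next to each z_i, z_i z_i = e_i absorbs
  repetitions, and the braid relations sort the z's into a product of cycles z_j z_(j+1) ... z_k.
  So a congruence class is determined by the two invariants.  Finally, the elements of BR(S_n)
  are exactly the pairs (permutation, support) in which the permutation preserves every run of
  the support, and peeling off one cycle at a time realises each of them by a word.
*)

section \<open>Words modulo the relations\<close>

abbreviation rcong :: "nat \<Rightarrow> gen list \<Rightarrow> gen list \<Rightarrow> bool" where
  "rcong n \<equiv> wcong (rels n)"

lemmas wcong_trans[trans] = wcong.trans

lemma wcong_append: "wcong R u v \<Longrightarrow> wcong R (x @ u @ y) (x @ v @ y)"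
proof (induction rule: wcong.induct)
  case (rel l r u v)
  then show ?case using wcong.rel[of l r R "x @ u" "v @ y"] by simp
qed (auto intro: wcong.refl wcong.sym wcong.trans)

lemma wcong_append_left: "wcong R u v \<Longrightarrow> wcong R (x @ u) (x @ v)"
  using wcong_append[of R u v x "[]"] by simp

lemma wcong_append_right: "wcong R u v \<Longrightarrow> wcong R (u @ y) (v @ y)"
  using wcong_append[of R u v "[]" y] by simp

lemma wcong_Cons: "wcong R u v \<Longrightarrow> wcong R (g # u) (g # v)"
  using wcong_append_left[of R u v "[g]"] by simp

lemma wcong_relI: "(l, r) \<in> R \<Longrightarrow> wcong R (l @ y) (r @ y)"
  using wcong.rel[of l r R "[]" y] by simp

lemma rels_E_idem: "1 \<le> i \<Longrightarrow> i < n \<Longrightarrow> ([E i, E i], [E i]) \<in> rels n"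
  unfolding rels_def by blast

lemma rels_E_comm:
  "1 \<le> i \<Longrightarrow> i < n \<Longrightarrow> 1 \<le> j \<Longrightarrow> j < n \<Longrightarrow> ([E i, E j], [E j, E i]) \<in> rels n"
  unfolding rels_def by blast

lemma rels_E_Z_comm:
  "1 \<le> i \<Longrightarrow> i < n \<Longrightarrow> 1 \<le> j \<Longrightarrow> j < n \<Longrightarrow> ([E i, Z j], [Z j, E i]) \<in> rels n"
  unfolding rels_def by blast

lemma rels_Z_braid:
  "1 \<le> i \<Longrightarrow> Suc i < n \<Longrightarrow> ([Z i, Z (Suc i), Z i], [Z (Suc i), Z i, Z (Suc i)]) \<in> rels n"
  unfolding rels_def by force

lemma rels_Z_comm:
  "1 \<le> i \<Longrightarrow> i < n \<Longrightarrow> 1 \<le> j \<Longrightarrow> j < n \<Longrightarrow> Suc i < j \<or> Suc j < i \<Longrightarrow>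
   ([Z i, Z j], [Z j, Z i]) \<in> rels n"
  unfolding rels_def by force

lemma rels_Z_square: "1 \<le> i \<Longrightarrow> i < n \<Longrightarrow> ([Z i, Z i], [E i]) \<in> rels n"
  unfolding rels_def by blast

lemma rels_E_Z_absorb: "1 \<le> i \<Longrightarrow> i < n \<Longrightarrow> ([E i, Z i], [Z i]) \<in> rels n"
  unfolding rels_def by blast

section \<open>Invariants of words\<close>

fun gen_index :: "gen \<Rightarrow> nat" where
  "gen_index (E i) = i"
| "gen_index (Z i) = i"

lemma gens_iff: "g \<in> gens n \<longleftrightarrow> gen_index g \<in> {1..<n}"
  by (cases g) (auto simp: gens_def)

definition word_support :: "gen list \<Rightarrow> nat set" where
  "word_support w = gen_index ` set w"

lemma word_support_simps[simp]:
  "word_support [] = {}"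
  "word_support (g # w) = insert (gen_index g) (word_support w)"
  "word_support (u @ w) = word_support u \<union> word_support w"
  "word_support (map E l) = set l"
  "word_support (map Z l) = set l"
  by (auto simp: word_support_def image_image)

lemma words_iff: "set w \<subseteq> gens n \<longleftrightarrow> word_support w \<subseteq> {1..<n}"
  by (auto simp: word_support_def gens_iff)

fun word_perm :: "gen list \<Rightarrow> nat \<Rightarrow> nat" where
  "word_perm [] = id"
| "word_perm (E i # w) = word_perm w"
| "word_perm (Z i # w) = word_perm w \<circ> transpose i (Suc i)"

lemma word_perm_append[simp]: "word_perm (u @ v) = word_perm v \<circ> word_perm u"
proof (induction u)
  case (Cons g u)
  then show ?case by (cases g) (simp_all add: comp_assoc)
qed simp

lemma word_perm_map_E[simp]: "word_perm (map E l) = id"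
  by (induction l) auto

lemma word_perm_permutes: "word_support w \<subseteq> {a..<b} \<Longrightarrow> word_perm w permutes {a..b}"
proof (induction w)
  case (Cons g w)
  then have "word_perm w permutes {a..b}" "transpose (gen_index g) (Suc (gen_index g)) permutes {a..b}"
    by (auto intro: permutes_swap_id)
  then show ?case
    by (cases g) (auto simp only: word_perm.simps gen_index.simps intro: permutes_compose)
qed simp

lemma rels_invariants:
  "(l, r) \<in> rels n \<Longrightarrow> word_perm l = word_perm r \<and> word_support l = word_support r"
  unfolding rels_def by (auto simp: fun_eq_iff transpose_def)

lemma rcong_invariants:
  "rcong n u v \<Longrightarrow> word_perm u = word_perm v \<and> word_support u = word_support v"
proof (induction rule: wcong.induct)
  case (rel l r u v)
  then show ?case using rels_invariants[OF rel.hyps] by simp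
qed auto

definition joined :: "nat set \<Rightarrow> nat \<Rightarrow> nat \<Rightarrow> bool" where
  "joined S a b \<longleftrightarrow> {min a b..<max a b} \<subseteq> S"

lemma joined_refl[simp]: "joined S a a"
  by (simp add: joined_def)

lemma joined_commute: "joined S a b \<longleftrightarrow> joined S b a"
  by (simp add: joined_def min.commute max.commute)

lemma joined_trans:
  assumes "joined S a b" "joined S b c"
  shows "joined S a c"
  unfolding joined_def
proof
  fix t assume "t \<in> {min a c..<max a c}"
  then have "t \<in> {min a b..<max a b} \<or> t \<in> {min b c..<max b c}" by auto
  then show "t \<in> S" using assms by (auto simp: joined_def)
qed

lemma joined_mono: "S \<subseteq> S' \<Longrightarrow> joined S a b \<Longrightarrow> joined S' a b"
  by (auto simp: joined_def)

lemma joined_Suc_iff: "joined S a (Suc a) \<longleftrightarrow> a \<in> S"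
  by (simp add: joined_def)

lemma joined_empty_iff: "joined {} a b \<longleftrightarrow> a = b"
  by (auto simp: joined_def min_def max_def)

lemma joined_singleton_iff: "joined {i} a b \<longleftrightarrow> a = b \<or> {a, b} = {i, Suc i}"
proof
  assume j: "joined {i} a b"
  show "a = b \<or> {a, b} = {i, Suc i}"
  proof (cases "a = b")
    case False
    then have lt: "min a b < max a b" by (simp add: min_def max_def)
    then have lo: "min a b = i" using j by (auto simp: joined_def)
    have "\<not> Suc (min a b) < max a b"
    proof
      assume "Suc (min a b) < max a b"
      then have "Suc (min a b) \<in> {min a b..<max a b}" by simp
      then have "Suc (min a b) \<in> {i}" using j unfolding joined_def by blast
      then show False using lo by simp
    qed
    then have "max a b = Suc i" using lt lo by simp
    then show ?thesis using lo by (auto simp: min_def max_def split: if_splits)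
  qed simp
next
  assume "a = b \<or> {a, b} = {i, Suc i}"
  then show "joined {i} a b" by (auto simp: joined_def doubleton_eq_iff)
qed

lemma joined_between:
  assumes "joined S x k" "joined S z k" "x \<le> y" "y \<le> z"
  shows "joined S y k"
proof (cases "y \<le> k")
  case True
  then have "{min y k..<max y k} \<subseteq> {min x k..<max x k}"
    using assms(3) by (simp add: min_def max_def)
  then show ?thesis using assms(1) unfolding joined_def by (rule subset_trans)
next
  case False
  then have "{min y k..<max y k} \<subseteq> {min z k..<max z k}"
    using assms(4) by (simp add: min_def max_def)
  then show ?thesis using assms(2) unfolding joined_def by (rule subset_trans)
qed

lemma joined_rtrancl:
  assumes "\<And>t. t \<in> U \<Longrightarrow> (t, Suc t) \<in> r\<^sup>*" "sym r" "joined U a b"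
  shows "(a, b) \<in> r\<^sup>*"
proof -
  have up: "(a, b) \<in> r\<^sup>*" if "a \<le> b" "joined U a b" for a b
    using that
  proof (induction b rule: dec_induct)
    case (step m)
    then have "joined U a m" "m \<in> U" by (auto simp: joined_def)
    then show ?case using step.IH assms(1) by (meson rtrancl_trans)
  qed simp
  show ?thesis
  proof (cases "a \<le> b")
    case False
    then have "(b, a) \<in> r\<^sup>*" using up assms(3) joined_commute by simp
    then show ?thesis using assms(2) by (meson symD sym_rtrancl)
  qed (use up assms(3) in blast)
qed

lemma joined_word_perm: "joined (word_support w) k (word_perm w k)"
proof (induction w arbitrary: k)
  case (Cons g w)
  have "joined (word_support (g # w)) k (word_perm w k)"
    using Cons.IH by (rule joined_mono[rotated]) auto
  moreover have "joined (word_support (g # w)) k (transpose (gen_index g) (Suc (gen_index g)) k)"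
    by (auto simp: transpose_def joined_def)
  moreover have "joined (word_support (g # w)) (transpose (gen_index g) (Suc (gen_index g)) k)
      (word_perm w (transpose (gen_index g) (Suc (gen_index g)) k))"
    using Cons.IH by (rule joined_mono[rotated]) auto
  ultimately show ?case by (cases g) (auto intro: joined_trans)
qed simp

section \<open>Normal forms\<close>

lemma rcong_E_commute:
  assumes "a \<in> {1..<n}" "set w \<subseteq> gens n"
  shows "rcong n (E a # w) (w @ [E a])"
  using assms(2)
proof (induction w)
  case (Cons g w)
  have "rcong n (E a # g # w) (g # E a # w)"
  proof (cases g)
    case (E b)
    then show ?thesis using Cons.prems assms(1) wcong_relI[OF rels_E_comm[of a n b], of w]
      by (simp add: gens_def)
  next
    case (Z b)
    then show ?thesis using Cons.prems assms(1) wcong_relI[OF rels_E_Z_comm[of a n b], of w]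
      by (simp add: gens_def)
  qed
  also have "rcong n (g # E a # w) (g # w @ [E a])"
    using Cons by (intro wcong_Cons) auto
  finally show ?case by simp
qed (simp add: wcong.refl)

lemma rcong_Es_commute:
  assumes "set l \<subseteq> {1..<n}" "set w \<subseteq> gens n"
  shows "rcong n (map E l @ w) (w @ map E l)"
  using assms(1)
proof (induction l)
  case (Cons a l)
  then have "rcong n (E a # map E l @ w) (E a # w @ map E l)"
    by (intro wcong_Cons) auto
  also have "rcong n (E a # w @ map E l) (w @ E a # map E l)"
    using wcong_append_right[OF rcong_E_commute, of a n w "map E l"] Cons.prems assms(2) by simp
  finally show ?case by simp
qed (simp add: wcong.refl)

lemma rcong_E_absorb:
  assumes "a \<in> set l" "set l \<subseteq> {1..<n}"
  shows "rcong n (E a # map E l) (map E l)"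
  using assms
proof (induction l)
  case (Cons b l)
  show ?case
  proof (cases "a = b")
    case True
    then show ?thesis using Cons.prems wcong_relI[OF rels_E_idem[of a n], of "map E l"] by simp
  next
    case False
    have "rcong n (E a # E b # map E l) (E b # E a # map E l)"
      using Cons.prems False wcong_relI[OF rels_E_comm[of a n b], of "map E l"] by auto
    also have "rcong n (E b # E a # map E l) (E b # map E l)"
      using Cons False by (intro wcong_Cons) auto
    finally show ?thesis by simp
  qed
qed simp

lemma rcong_Es_absorb:
  assumes "set l \<subseteq> set m" "set m \<subseteq> {1..<n}"
  shows "rcong n (map E l @ map E m) (map E m)"
  using assms(1)
proof (induction l)
  case (Cons a l)
  then have "rcong n (E a # map E l @ map E m) (E a # map E m)"
    by (intro wcong_Cons) auto
  also have "rcong n (E a # map E m) (map E m)"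
    using Cons.prems assms(2) by (intro rcong_E_absorb) auto
  finally show ?case by simp
qed (simp add: wcong.refl)

lemma rcong_Es_set_eq:
  assumes "set l = set m" "set m \<subseteq> {1..<n}"
  shows "rcong n (map E l) (map E m)"
proof -
  have "rcong n (map E l) (map E m @ map E l)"
    using assms by (intro wcong.sym[OF rcong_Es_absorb]) auto
  also have "rcong n (map E m @ map E l) (map E l @ map E m)"
    using assms by (intro rcong_Es_commute) (auto simp: gens_def)
  also have "rcong n (map E l @ map E m) (map E m)"
    using assms by (intro rcong_Es_absorb) auto
  finally show ?thesis .
qed

lemma rcong_Z_commute_far:
  assumes "\<forall>k\<in>set ks. (Suc i < k \<or> Suc k < i) \<and> 1 \<le> k \<and> k < n" "1 \<le> i" "i < n"
  shows "rcong n (Z i # map Z ks) (map Z ks @ [Z i])"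
  using assms(1)
proof (induction ks)
  case (Cons k ks)
  have "rcong n (Z i # Z k # map Z ks) (Z k # Z i # map Z ks)"
    using Cons.prems assms(2,3) wcong_relI[OF rels_Z_comm[of i n k], of "map Z ks"] by simp
  also have "rcong n (Z k # Z i # map Z ks) (Z k # map Z ks @ [Z i])"
    using Cons by (intro wcong_Cons) auto
  finally show ?case by simp
qed (simp add: wcong.refl)

definition zcycle :: "nat \<Rightarrow> nat \<Rightarrow> gen list" where
  "zcycle j k = map Z [j..<Suc k]"

lemma zcycle_Cons: "j \<le> k \<Longrightarrow> zcycle j k = Z j # zcycle (Suc j) k"
  unfolding zcycle_def by (simp add: upt_conv_Cons)

lemma word_support_zcycle[simp]: "word_support (zcycle j k) = {j..k}"
  unfolding zcycle_def by auto

lemma word_perm_zcycle: "j \<le> Suc k \<Longrightarrow> word_perm (zcycle j k) j = Suc k"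
proof (induction "Suc k - j" arbitrary: j)
  case (Suc d)
  show ?case
  proof (cases "j = Suc k")
    case False
    then have "word_perm (zcycle j k) j = word_perm (zcycle (Suc j) k) (Suc j)"
      using Suc.prems by (simp add: zcycle_Cons)
    also have "\<dots> = Suc k" using Suc False by simp
    finally show ?thesis .
  qed (simp add: zcycle_def)
qed (simp add: zcycle_def)

lemma rcong_Z_zcycle_far:
  assumes "1 \<le> i" "Suc i < j" "j \<le> Suc k" "k < n"
  shows "rcong n (Z i # zcycle j k) (zcycle j k @ [Z i])"
  unfolding zcycle_def using assms by (intro rcong_Z_commute_far) auto

lemma rcong_Z_zcycle_braid:
  assumes "1 \<le> j" "j < i" "i \<le> k" "k < n"
  shows "rcong n (Z i # zcycle j k) (zcycle j k @ [Z (i - 1)])"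
proof -
  define A where "A = map Z [j..<i - 1]"
  define B where "B = map Z [Suc i..<Suc k]"
  have "[j..<Suc k] = [j..<i - 1] @ [i - 1, i] @ [Suc i..<Suc k]"
    using assms upt_add_eq_append[of j "i - 1" "Suc k - (i - 1)"]
    by (cases i) (auto simp: upt_conv_Cons)
  then have split: "zcycle j k = A @ [Z (i - 1), Z i] @ B"
    by (simp add: zcycle_def A_def B_def)
  have A_far: "\<forall>t\<in>set [j..<i - 1]. (Suc i < t \<or> Suc t < i) \<and> 1 \<le> t \<and> t < n"
    and B_far: "\<forall>t\<in>set [Suc i..<Suc k]. (Suc (i - 1) < t \<or> Suc t < i - 1) \<and> 1 \<le> t \<and> t < n"
    using assms by auto
  have "rcong n (Z i # A @ [Z (i - 1), Z i] @ B) (A @ [Z i, Z (i - 1), Z i] @ B)"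
    using wcong_append_right[OF rcong_Z_commute_far[OF A_far], of "[Z (i - 1), Z i] @ B"] assms
    by (simp add: A_def)
  also have "rcong n \<dots> (A @ [Z (i - 1), Z i, Z (i - 1)] @ B)"
    using wcong.sym[OF wcong.rel[OF rels_Z_braid[of "i - 1" n], of A B]] assms by simp
  also have "rcong n \<dots> (A @ [Z (i - 1), Z i] @ B @ [Z (i - 1)])"
    using wcong_append_left[OF rcong_Z_commute_far[OF B_far], of "A @ [Z (i - 1), Z i]"] assms
    by (simp add: B_def)
  finally show ?thesis using split by simp
qed

text \<open>\<open>perm_nf m\<close> consists of the normal forms
  \<open>zcycle j\<^sub>m m @ \<dots> @ zcycle j\<^sub>1 1\<close> of the permutations of \<open>{1..m+1}\<close>:
  \<open>zcycle j k\<close> moves \<open>j\<close> to \<open>k + 1\<close>, and is empty for \<open>j = k + 1\<close>.\<close>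

fun perm_nf :: "nat \<Rightarrow> gen list set" where
  "perm_nf 0 = {[]}"
| "perm_nf (Suc m) = {zcycle j (Suc m) @ x | j x. 1 \<le> j \<and> j \<le> Suc (Suc m) \<and> x \<in> perm_nf m}"

lemma Nil_in_perm_nf: "[] \<in> perm_nf m"
proof (induction m)
  case (Suc m)
  have "[] = zcycle (Suc (Suc m)) (Suc m) @ []" by (simp add: zcycle_def)
  then show ?case using Suc by fastforce
qed simp

lemma word_support_perm_nf: "w \<in> perm_nf m \<Longrightarrow> word_support w \<subseteq> {1..m}"
  by (induction m arbitrary: w) fastforce+

lemma rcong_Es_Z_square:
  assumes "i \<in> set T" "set T \<subseteq> {1..<n}"
  shows "rcong n (map E T @ Z i # Z i # r) (map E T @ r)"
proof -
  have i: "1 \<le> i" "i < n" using assms by auto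
  have "rcong n (map E T @ Z i # Z i # r) (map E T @ E i # r)"
    using wcong.rel[OF rels_Z_square[OF i], of "map E T" r] by simp
  also have "rcong n \<dots> (E i # map E T @ r)"
    using wcong_append_right[OF rcong_Es_commute[OF assms(2), of "[E i]"], of r] i
    by (simp add: gens_def)
  also have "rcong n \<dots> (map E T @ r)"
    using wcong_append_right[OF rcong_E_absorb[OF assms], of r] by simp
  finally show ?thesis .
qed

lemma rcong_Es_Z_pass:
  assumes "rcong n (Z i # c) (c @ [Z i'])" "set c \<subseteq> gens n" "set T \<subseteq> {1..<n}"
    and "rcong n (map E T @ Z i' # x) (map E T @ x')"
  shows "rcong n (map E T @ Z i # c @ x) (map E T @ c @ x')"
proof -
  have "rcong n (map E T @ Z i # c @ x) (map E T @ c @ Z i' # x)"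
    using wcong_append_left[OF wcong_append_right[OF assms(1), of x], of "map E T"] by simp
  also have "rcong n \<dots> (c @ map E T @ Z i' # x)"
    using wcong_append_right[OF rcong_Es_commute[OF assms(3,2)]] by simp
  also have "rcong n \<dots> (c @ map E T @ x')"
    using wcong_append_left[OF assms(4)] by simp
  also have "rcong n \<dots> (map E T @ c @ x')"
    using wcong.sym[OF wcong_append_right[OF rcong_Es_commute[OF assms(3,2)]]] by simp
  finally show ?thesis .
qed

lemma rcong_Es_Z_perm_nf:
  assumes "w \<in> perm_nf m" "i \<in> {1..m}" "m < n" "i \<in> set T"
    and "word_support w \<subseteq> set T" "set T \<subseteq> {1..<n}"
  shows "\<exists>w'\<in>perm_nf m. word_support w' \<subseteq> set T \<and> rcong n (map E T @ Z i # w) (map E T @ w')"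
  using assms
proof (induction m arbitrary: i w)
  case (Suc m)
  from Suc.prems(1) obtain j x where w: "w = zcycle j (Suc m) @ x"
    and j: "1 \<le> j" "j \<le> Suc (Suc m)" and x: "x \<in> perm_nf m"
    by auto
  let ?c = "zcycle j (Suc m)"
  have T: "word_support x \<subseteq> set T" "{j..Suc m} \<subseteq> set T" using Suc.prems(5) w by auto
  have pass: ?case if c: "rcong n (Z i # ?c) (?c @ [Z i'])" and i': "i' \<in> {1..m}" "i' \<in> set T" for i'
  proof -
    obtain x' where x': "x' \<in> perm_nf m" "word_support x' \<subseteq> set T"
      and IH: "rcong n (map E T @ Z i' # x) (map E T @ x')"
      using Suc.IH[OF x i'(1) _ i'(2) T(1) Suc.prems(6)] Suc.prems(3) by auto
    have "set ?c \<subseteq> gens n" using Suc.prems(3) j by (auto simp: words_iff)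
    then have "rcong n (map E T @ Z i # w) (map E T @ ?c @ x')"
      using rcong_Es_Z_pass[OF c _ Suc.prems(6) IH] w by simp
    then show ?thesis using x' j T by (intro bexI[of _ "?c @ x'"]) auto
  qed
  consider "Suc i = j" | "i = j" | "Suc i < j" | "j < i" by linarith
  then show ?case
  proof cases
    case 1
    then have "Z i # w = zcycle i (Suc m) @ x" using w zcycle_Cons[of i "Suc m"] Suc.prems(2) by simp
    moreover have "zcycle i (Suc m) @ x \<in> perm_nf (Suc m)"
      using x Suc.prems(2) by (auto intro!: exI[of _ i])
    moreover have "word_support (zcycle i (Suc m) @ x) \<subseteq> set T"
      using T Suc.prems(2,4) 1 atLeastAtMost_insertL[of i "Suc m"] by auto
    ultimately show ?thesis by (metis wcong.refl)
  next
    case 2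
    define r where "r = zcycle (Suc i) (Suc m) @ x"
    have "w = Z i # r" using w 2 zcycle_Cons[of j "Suc m"] Suc.prems(2) r_def by simp
    then have "rcong n (map E T @ Z i # w) (map E T @ r)"
      using rcong_Es_Z_square[OF Suc.prems(4,6)] by simp
    moreover have "r \<in> perm_nf (Suc m)"
      using x 2 Suc.prems(2) unfolding r_def by (auto intro!: exI[of _ "Suc j"])
    moreover have "word_support r \<subseteq> set T" using T 2 unfolding r_def by auto
    ultimately show ?thesis by blast
  next
    case 3
    then show ?thesis
      using pass[OF rcong_Z_zcycle_far] Suc.prems(2,3,4) j by auto
  next
    case 4
    have "i - 1 \<in> {j..Suc m}" using 4 Suc.prems(2) by auto
    then have "i - 1 \<in> {1..m}" "i - 1 \<in> set T" using 4 j Suc.prems(2) T(2) by auto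
    with 4 show ?thesis
      using pass[OF rcong_Z_zcycle_braid[OF j(1) 4]] Suc.prems(2,3) by auto
  qed
qed simp

lemma rcong_normal_form:
  assumes "set w \<subseteq> gens n"
  shows "\<exists>l N. N \<in> perm_nf (n - 1) \<and> set l = word_support w \<and> word_support N \<subseteq> set l
           \<and> rcong n w (map E l @ N)"
  using assms
proof (induction w)
  case Nil
  show ?case
    using Nil_in_perm_nf wcong.refl by (intro exI[of _ "[]"]) auto
next
  case (Cons g w)
  then obtain l N where N: "N \<in> perm_nf (n - 1)" and l: "set l = word_support w" "word_support N \<subseteq> set l"
    and c: "rcong n w (map E l @ N)"
    by auto
  have l_valid: "set l \<subseteq> {1..<n}" using Cons.prems l words_iff by auto
  show ?case
  proof (cases g)
    case (E a)
    have "rcong n (g # w) (map E (a # l) @ N)" using wcong_Cons[OF c] E by simp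
    then show ?thesis using N l E by (intro exI[of _ "a # l"] exI[of _ N]) auto
  next
    case (Z a)
    have a: "a \<in> {1..<n}" using Cons.prems Z by (auto simp: gens_def)
    have "\<exists>N'\<in>perm_nf (n - 1). word_support N' \<subseteq> set (a # l)
        \<and> rcong n (map E (a # l) @ Z a # N) (map E (a # l) @ N')"
      by (rule rcong_Es_Z_perm_nf[OF N]) (use a l l_valid in auto)
    then obtain N' where N': "N' \<in> perm_nf (n - 1)" "word_support N' \<subseteq> set (a # l)"
      and absorb: "rcong n (map E (a # l) @ Z a # N) (map E (a # l) @ N')"
      by blast
    have "rcong n (Z a # w) (Z a # map E l @ N)" using wcong_Cons[OF c] .
    also have "rcong n \<dots> (E a # Z a # map E l @ N)"
      using wcong.sym[OF wcong_relI[OF rels_E_Z_absorb, of a n "map E l @ N"]] a by simp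
    also have "rcong n \<dots> (E a # map E l @ Z a # N)"
    proof -
      have "rcong n ([Z a] @ map E l) (map E l @ [Z a])"
        using wcong.sym[OF rcong_Es_commute[OF l_valid, of "[Z a]"]] a by (simp add: gens_def)
      from wcong_Cons[OF wcong_append_right[OF this, of N]] show ?thesis by simp
    qed
    also have "rcong n \<dots> (map E (a # l) @ N')" using absorb by simp
    finally show ?thesis using N' l Z by (intro exI[of _ "a # l"] exI[of _ N']) auto
  qed
qed

lemma perm_nf_permutes: "w \<in> perm_nf m \<Longrightarrow> word_perm w permutes {1..Suc m}"
  using word_support_perm_nf by (force intro: word_perm_permutes)

lemma perm_nf_inj:
  "w \<in> perm_nf m \<Longrightarrow> w' \<in> perm_nf m \<Longrightarrow> word_perm w = word_perm w' \<Longrightarrow> w = w'"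
proof (induction m arbitrary: w w')
  case (Suc m)
  from Suc.prems(1) obtain j x where w: "w = zcycle j (Suc m) @ x"
    and j: "j \<le> Suc (Suc m)" and x: "x \<in> perm_nf m"
    by auto
  from Suc.prems(2) obtain j' x' where w': "w' = zcycle j' (Suc m) @ x'"
    and j': "j' \<le> Suc (Suc m)" and x': "x' \<in> perm_nf m"
    by auto
  have "word_perm x (Suc (Suc m)) = Suc (Suc m)" "word_perm x' (Suc (Suc m)) = Suc (Suc m)"
    using permutes_not_in[OF perm_nf_permutes[OF x]] permutes_not_in[OF perm_nf_permutes[OF x']]
    by auto
  then have "word_perm w j = Suc (Suc m)" "word_perm w' j' = Suc (Suc m)"
    using w w' j j' by (simp_all add: word_perm_zcycle)
  then have "word_perm w j = word_perm w j'" using Suc.prems(3) by simp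
  then have jj: "j = j'"
    using permutes_inj[OF perm_nf_permutes[OF Suc.prems(1)]] by (simp add: inj_eq)
  have "word_perm (zcycle j (Suc m)) permutes {j..Suc (Suc m)}"
    by (rule word_perm_permutes) auto
  moreover have "word_perm x \<circ> word_perm (zcycle j (Suc m)) = word_perm x' \<circ> word_perm (zcycle j (Suc m))"
    using Suc.prems(3) w w' jj by (simp add: fun_eq_iff)
  ultimately have "word_perm x = word_perm x'"
    by (metis permutes_surj surj_fun_eq)
  then show ?case using Suc.IH[OF x x'] w w' jj by simp
qed simp

lemma rcong_iff_invariants:
  assumes u: "set u \<subseteq> gens n" and v: "set v \<subseteq> gens n"
  shows "rcong n u v \<longleftrightarrow> word_perm u = word_perm v \<and> word_support u = word_support v"
proof
  assume "word_perm u = word_perm v \<and> word_support u = word_support v"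
  then have perm: "word_perm u = word_perm v" and supp: "word_support u = word_support v" by auto
  obtain l N where N: "N \<in> perm_nf (n - 1)" "set l = word_support u" and cu: "rcong n u (map E l @ N)"
    using rcong_normal_form[OF u] by blast
  obtain l' N' where N': "N' \<in> perm_nf (n - 1)" "set l' = word_support v" and cv: "rcong n v (map E l' @ N')"
    using rcong_normal_form[OF v] by blast
  have "word_perm N = word_perm N'"
    using perm rcong_invariants[OF cu] rcong_invariants[OF cv] by simp
  then have NN: "N = N'" using perm_nf_inj N(1) N'(1) by blast
  note cu
  also have "rcong n (map E l @ N) (map E l' @ N)"
    using N(2) N'(2) supp v words_iff by (intro wcong_append_right rcong_Es_set_eq) auto
  also have "rcong n \<dots> v" using wcong.sym[OF cv] NN by simp
  finally show "rcong n u v" .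
qed (rule rcong_invariants)

lemma ex_word_support_subset:
  assumes "\<sigma> permutes {1..p}" "\<forall>k. joined S k (\<sigma> k)"
  shows "\<exists>w. word_support w \<subseteq> S \<and> word_perm w = \<sigma>"
  using assms
proof (induction p arbitrary: \<sigma>)
  case 0
  then show ?case by (intro exI[of _ "[]"]) simp
next
  case (Suc q)
  define j where "j = inv \<sigma> (Suc q)"
  have \<sigma>j: "\<sigma> j = Suc q" and j: "j \<in> {1..Suc q}"
    using permutes_inverses(1)[OF Suc.prems(1)] permutes_in_image[OF permutes_inv[OF Suc.prems(1)]]
    by (auto simp: j_def)
  define c where "c = word_perm (zcycle j q)"
  have cj: "c j = Suc q" unfolding c_def using word_perm_zcycle j by simp
  have c_perm: "c permutes {1..Suc q}"
    unfolding c_def using j by (intro word_perm_permutes) auto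
  have "joined S j (Suc q)" using Suc.prems(2) \<sigma>j by metis
  then have cycle_S: "{j..q} \<subseteq> S" using j by (auto simp: joined_def)
  have c_joined: "joined S y (c y)" for y
    unfolding c_def using joined_mono[OF _ joined_word_perm[of "zcycle j q" y]] cycle_S by simp
  define \<sigma>' where "\<sigma>' = \<sigma> \<circ> inv c"
  have "\<sigma>' permutes {1..Suc q}"
    unfolding \<sigma>'_def using Suc.prems(1) c_perm by (intro permutes_compose permutes_inv)
  moreover have "\<sigma>' x = x" if "x \<in> {1..Suc q} - {1..q}" for x
  proof -
    have "x = Suc q" using that by auto
    then show ?thesis using \<sigma>j cj permutes_inverses(2)[OF c_perm] by (metis \<sigma>'_def comp_apply)
  qed
  ultimately have \<sigma>'_perm: "\<sigma>' permutes {1..q}"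
    by (rule permutes_superset)
  have "joined S k (\<sigma>' k)" for k
    using c_joined[of "inv c k"] Suc.prems(2) permutes_inverses(1)[OF c_perm]
    by (metis \<sigma>'_def comp_apply joined_commute joined_trans)
  then obtain w' where w': "word_support w' \<subseteq> S" "word_perm w' = \<sigma>'"
    using Suc.IH[OF \<sigma>'_perm] by blast
  have "word_perm (zcycle j q @ w') = \<sigma>"
    using w'(2) permutes_inverses(2)[OF c_perm] by (auto simp: \<sigma>'_def c_def fun_eq_iff)
  then show ?case using w'(1) cycle_S by (intro exI[of _ "zcycle j q @ w'"]) auto
qed

lemma ex_word:
  assumes "\<sigma> permutes {1..n}" "S \<subseteq> {1..<n}" "\<forall>k. joined S k (\<sigma> k)"
  obtains w where "set w \<subseteq> gens n" "word_perm w = \<sigma>" "word_support w = S"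
proof -
  obtain w where w: "word_support w \<subseteq> S" "word_perm w = \<sigma>"
    using ex_word_support_subset[OF assms(1,3)] by blast
  have "finite S" using finite_subset[OF assms(2)] by simp
  then have "word_support (map E (sorted_list_of_set S) @ w) = S" using w(1) by auto
  moreover have "word_perm (map E (sorted_list_of_set S) @ w) = \<sigma>" using w(2) by simp
  ultimately show ?thesis using that assms(2) words_iff by metis
qed

section \<open>Partitions\<close>

lemma rel_of_eq: "rel_of P = {(x, y). \<exists>B\<in>P. x \<in> B \<and> y \<in> B}"
  by (auto simp: rel_of_def)

lemma rel_of_mono:
  assumes "\<And>B. B \<in> P \<Longrightarrow> \<exists>C\<in>Q. B \<subseteq> C"
  shows "rel_of P \<subseteq> rel_of Q"
  using assms unfolding rel_of_def by (simp add: SUP_le_iff) (meson SUP_upper2 Sigma_mono)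

lemma Setcompr_image_eq: "(\<And>k. k \<in> K \<Longrightarrow> P (h k)) \<Longrightarrow> {g C | C. C \<in> h ` K \<and> P C} = (\<lambda>k. g (h k)) ` K"
  by auto

lemma partition_on_image:
  assumes "\<And>k. k \<in> K \<Longrightarrow> B k \<noteq> {}" "(\<Union>k\<in>K. B k) = A"
    and "\<And>k k'. k \<in> K \<Longrightarrow> k' \<in> K \<Longrightarrow> B k \<inter> B k' \<noteq> {} \<Longrightarrow> B k = B k'"
  shows "partition_on A (B ` K)"
proof (rule partition_onI)
  show "\<Union>(B ` K) = A" "{} \<notin> B ` K" using assms(1,2) by auto
  show "disjnt p q" if "p \<in> B ` K" "q \<in> B ` K" "p \<noteq> q" for p q
    using that assms(3) by (auto simp: disjnt_def)
qed

lemma partition_on_shifts: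
  fixes A :: "nat set"
  assumes P: "partition_on A P" and "F \<noteq> {}"
    and shifts_disjoint: "\<And>s t. s \<in> F \<Longrightarrow> t \<in> F \<Longrightarrow> s \<noteq> t \<Longrightarrow> (\<lambda>x. x + s) ` A \<inter> (\<lambda>x. x + t) ` A = {}"
  shows "partition_on (\<Union>s\<in>F. (\<lambda>x. x + s) ` A) ((\<lambda>B. \<Union>s\<in>F. (\<lambda>x. x + s) ` B) ` P)"
proof (rule partition_onI)
  show "\<Union>((\<lambda>B. \<Union>s\<in>F. (\<lambda>x. x + s) ` B) ` P) = (\<Union>s\<in>F. (\<lambda>x. x + s) ` A)"
    using partition_onD1[OF P] by auto
  show "{} \<notin> (\<lambda>B. \<Union>s\<in>F. (\<lambda>x. x + s) ` B) ` P"
    using partition_onD3[OF P] \<open>F \<noteq> {}\<close> by auto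
  fix p q assume "p \<in> (\<lambda>B. \<Union>s\<in>F. (\<lambda>x. x + s) ` B) ` P" "q \<in> (\<lambda>B. \<Union>s\<in>F. (\<lambda>x. x + s) ` B) ` P" "p \<noteq> q"
  then obtain B B' where B: "B \<in> P" "B' \<in> P" "B \<noteq> B'"
    and pq: "p = (\<Union>s\<in>F. (\<lambda>x. x + s) ` B)" "q = (\<Union>s\<in>F. (\<lambda>x. x + s) ` B')"
    by blast
  have "disjnt B B'" using partition_onD2[OF P] B by (auto simp: pairwise_def)
  moreover have "B \<subseteq> A" "B' \<subseteq> A" using partition_onD1[OF P] B by auto
  ultimately show "disjnt p q"
    using shifts_disjoint unfolding pq disjnt_def by fastforce
qed

lemma partition_on_subset_eq:
  assumes "partition_on A P" "partition_on A Q" "P \<subseteq> Q"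
  shows "P = Q"
proof (rule ccontr)
  assume "P \<noteq> Q"
  then obtain q where q: "q \<in> Q" "q \<notin> P" using assms(3) by blast
  moreover have "q \<noteq> {}" using partition_onD3[OF assms(2)] q by blast
  then obtain x where "x \<in> q" by blast
  then obtain p where p: "p \<in> P" "x \<in> p" using partition_onD1[OF assms(1)] partition_onD1[OF assms(2)] q by blast
  then have "p = q"
    using partition_onD2[OF assms(2)] q \<open>x \<in> q\<close> assms(3) by (auto simp: pairwise_def disjnt_def)
  then show False using p q by blast
qed

lemma partition_on_block_unique:
  "partition_on A P \<Longrightarrow> B \<in> P \<Longrightarrow> B' \<in> P \<Longrightarrow> x \<in> B \<Longrightarrow> x \<in> B' \<Longrightarrow> B = B'"
  by (metis disjnt_iff pairwiseD partition_onD2)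

definition pmult_rel :: "nat \<Rightarrow> nat set set \<Rightarrow> nat set set \<Rightarrow> (nat \<times> nat) set" where
  "pmult_rel n I J = rel_of I \<union> rel_of ((\<lambda>B. (\<lambda>x. x + n) ` B) ` J)"

text \<open>The product is computed from any partition \<open>P\<close> of the three rows \<open>{1..3*n}\<close> whose
  blocks are exactly the connected components of \<open>I\<close> stacked on the shifted \<open>J\<close>.\<close>

lemma pmult_via_partition:
  assumes P: "partition_on {1..3*n} P"
    and sub: "pmult_rel n I J \<subseteq> rel_of P"
    and connected: "\<forall>B\<in>P. \<exists>c\<in>B. \<forall>x\<in>B. (c, x) \<in> (pmult_rel n I J)\<^sup>+"
  shows "pmult n I J = {(\<lambda>x. if x > 2*n then x - n else x) ` (C - {n+1..2*n}) | C. C \<in> P \<and> C - {n+1..2*n} \<noteq> {}}"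
proof -
  let ?r = "pmult_rel n I J"
  have eq: "equiv {1..3*n} (rel_of P)" using equiv_partition_on[OF P] by (simp add: rel_of_eq)
  have "?r\<^sup>+ \<subseteq> (rel_of P)\<^sup>+" using sub by (rule trancl_mono_subset)
  also have "\<dots> = rel_of P" using eq by (simp add: equiv_def trans_trancl)
  finally have "?r\<^sup>+ \<subseteq> rel_of P" .
  moreover have "rel_of P \<subseteq> ?r\<^sup>+"
  proof
    fix p assume "p \<in> rel_of P"
    then obtain x y B where p: "p = (x, y)" and B: "B \<in> P" "x \<in> B" "y \<in> B" by (auto simp: rel_of_def)
    obtain c where c: "\<forall>z\<in>B. (c, z) \<in> ?r\<^sup>+" using connected B(1) by blast
    have "sym ?r" unfolding pmult_rel_def by (intro sym_Un) (auto simp: sym_def rel_of_def)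
    then have "(x, c) \<in> ?r\<^sup>+" using c B(2) sym_trancl by (metis symD)
    then show "p \<in> ?r\<^sup>+" using c B(3) p by auto
  qed
  ultimately have "?r\<^sup>+ = rel_of P" by blast
  moreover have "{1..3*n} // rel_of P = P" using partition_on_eq_quotient[OF P] by (simp add: rel_of_eq)
  ultimately show ?thesis unfolding pmult_def Let_def pmult_rel_def[symmetric] by simp
qed

section \<open>Permutation partitions and box partitions\<close>

definition perm_partition :: "nat \<Rightarrow> (nat \<Rightarrow> nat) \<Rightarrow> nat set set" where
  "perm_partition n \<sigma> = (\<lambda>k. {k, n + \<sigma> k}) ` {1..n}"

lemma UN_shifted_permutes:
  fixes f :: "nat \<Rightarrow> nat"
  assumes "f permutes {1..n}"
  shows "(\<Union>k\<in>{1..n}. {c + f k}) = {c + 1..c + n}"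
proof -
  have "(\<Union>k\<in>{1..n}. {c + f k}) = (\<lambda>x. x + c) ` (f ` {1..n})" by (auto simp: add.commute)
  then show ?thesis using permutes_image[OF assms] by simp
qed

lemma perm_partition_in_pmon:
  assumes \<sigma>: "\<sigma> permutes {1..n}"
  shows "perm_partition n \<sigma> \<in> pmon n"
  unfolding pmon_def perm_partition_def mem_Collect_eq
proof (rule partition_on_image)
  have "(\<Union>k\<in>{1..n}. {k, n + \<sigma> k}) = {1..n} \<union> (\<Union>k\<in>{1..n}. {n + \<sigma> k})" by auto
  then show "(\<Union>k\<in>{1..n}. {k, n + \<sigma> k}) = {1..2*n}"
    unfolding UN_shifted_permutes[OF \<sigma>] by auto
  show "{k, n + \<sigma> k} = {k', n + \<sigma> k'}"
    if "k \<in> {1..n}" "k' \<in> {1..n}" "{k, n + \<sigma> k} \<inter> {k', n + \<sigma> k'} \<noteq> {}" for k k'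
  proof -
    have "\<sigma> k \<in> {1..n}" "\<sigma> k' \<in> {1..n}" using that(1,2) permutes_in_image[OF \<sigma>] by auto
    then have "k = k' \<or> \<sigma> k = \<sigma> k'" using that by auto
    then show ?thesis using permutes_inj[OF \<sigma>] by (auto dest: injD)
  qed
qed simp

lemma perm_strands_partition:
  fixes n :: nat
  assumes \<sigma>: "\<sigma> permutes {1..n}" and \<tau>: "\<tau> permutes {1..n}"
  shows "partition_on {1..3*n} ((\<lambda>k. {k, n + \<sigma> k, 2*n + \<tau> (\<sigma> k)}) ` {1..n})"
proof (rule partition_on_image)
  have mid: "(\<Union>k\<in>{1..n}. {n + \<sigma> k}) = {n + 1..n + n}"
    using UN_shifted_permutes[OF \<sigma>] .
  have bottom: "(\<Union>k\<in>{1..n}. {2*n + \<tau> (\<sigma> k)}) = {2*n + 1..2*n + n}"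
    using UN_shifted_permutes[OF permutes_compose[OF \<sigma> \<tau>]] by simp
  have "(\<Union>k\<in>{1..n}. {k, n + \<sigma> k, 2*n + \<tau> (\<sigma> k)})
      = {1..n} \<union> (\<Union>k\<in>{1..n}. {n + \<sigma> k}) \<union> (\<Union>k\<in>{1..n}. {2*n + \<tau> (\<sigma> k)})" by auto
  then show "(\<Union>k\<in>{1..n}. {k, n + \<sigma> k, 2*n + \<tau> (\<sigma> k)}) = {1..3*n}"
    unfolding mid bottom by auto
  show "{k, n + \<sigma> k, 2*n + \<tau> (\<sigma> k)} = {k', n + \<sigma> k', 2*n + \<tau> (\<sigma> k')}"
    if k: "k \<in> {1..n}" "k' \<in> {1..n}"
      and meet: "{k, n + \<sigma> k, 2*n + \<tau> (\<sigma> k)} \<inter> {k', n + \<sigma> k', 2*n + \<tau> (\<sigma> k')} \<noteq> {}"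
    for k k'
  proof -
    obtain z where z: "z \<in> {k, n + \<sigma> k, 2*n + \<tau> (\<sigma> k)}" "z \<in> {k', n + \<sigma> k', 2*n + \<tau> (\<sigma> k')}"
      using meet by blast
    have "\<sigma> k \<in> {1..n}" "\<sigma> k' \<in> {1..n}" "\<tau> (\<sigma> k) \<in> {1..n}" "\<tau> (\<sigma> k') \<in> {1..n}"
      using k permutes_in_image[OF \<sigma>] permutes_in_image[OF \<tau>] by auto
    then consider "k = k'" | "\<sigma> k = \<sigma> k'" | "\<tau> (\<sigma> k) = \<tau> (\<sigma> k')"
      using k z by (cases "z \<le> n"; cases "z \<le> 2*n") auto
    then have "k = k'" using permutes_inj[OF \<sigma>] permutes_inj[OF \<tau>] by cases (auto dest: injD)
    then show ?thesis by simp
  qed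
qed simp

lemma shift_perm_partition:
  assumes "\<sigma> permutes {1..n}"
  shows "(\<lambda>B. (\<lambda>x. x + n) ` B) ` perm_partition n \<tau> = (\<lambda>k. {n + \<sigma> k, 2*n + \<tau> (\<sigma> k)}) ` {1..n}"
proof -
  have "(\<lambda>B. (\<lambda>x. x + n) ` B) ` perm_partition n \<tau> = (\<lambda>j. {n + j, 2*n + \<tau> j}) ` {1..n}"
    unfolding perm_partition_def image_image by (rule image_cong[OF HOL.refl]) auto
  also have "\<dots> = (\<lambda>j. {n + j, 2*n + \<tau> j}) ` (\<sigma> ` {1..n})" using permutes_image[OF assms] by simp
  finally show ?thesis by (simp add: image_image)
qed

lemma pmult_perm_partition:
  fixes n :: nat
  assumes \<sigma>: "\<sigma> permutes {1..n}" and \<tau>: "\<tau> permutes {1..n}"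
  shows "pmult n (perm_partition n \<sigma>) (perm_partition n \<tau>) = perm_partition n (\<tau> \<circ> \<sigma>)"
proof -
  define T where "T k = {k, n + \<sigma> k, 2*n + \<tau> (\<sigma> k)}" for k
  let ?r = "pmult_rel n (perm_partition n \<sigma>) (perm_partition n \<tau>)"
  have P: "partition_on {1..3*n} (T ` {1..n})"
    unfolding T_def by (rule perm_strands_partition[OF \<sigma> \<tau>])
  have sub: "?r \<subseteq> rel_of (T ` {1..n})"
    unfolding pmult_rel_def shift_perm_partition[OF \<sigma>] unfolding perm_partition_def
    by (intro Un_least rel_of_mono) (auto simp: T_def)
  have connected: "\<forall>B\<in>T ` {1..n}. \<exists>c\<in>B. \<forall>x\<in>B. (c, x) \<in> ?r\<^sup>+"
  proof
    fix B assume "B \<in> T ` {1..n}"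
    then obtain k where k: "k \<in> {1..n}" "B = T k" by blast
    have "{k, n + \<sigma> k} \<in> perm_partition n \<sigma>"
      "{n + \<sigma> k, 2*n + \<tau> (\<sigma> k)} \<in> (\<lambda>B. (\<lambda>x. x + n) ` B) ` perm_partition n \<tau>"
      unfolding shift_perm_partition[OF \<sigma>] using k by (auto simp: perm_partition_def)
    then have "(k, n + \<sigma> k) \<in> ?r" "(n + \<sigma> k, k) \<in> ?r" "(n + \<sigma> k, 2*n + \<tau> (\<sigma> k)) \<in> ?r"
      unfolding pmult_rel_def rel_of_def by blast+
    then have "(k, k) \<in> ?r\<^sup>+" "(k, n + \<sigma> k) \<in> ?r\<^sup>+" "(k, 2*n + \<tau> (\<sigma> k)) \<in> ?r\<^sup>+"
      by (meson r_into_trancl trancl_into_trancl)+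
    then show "\<exists>c\<in>B. \<forall>x\<in>B. (c, x) \<in> ?r\<^sup>+" using k by (auto simp: T_def)
  qed
  have "pmult n (perm_partition n \<sigma>) (perm_partition n \<tau>) =
      {(\<lambda>x. if x > 2*n then x - n else x) ` (C - {n+1..2*n}) | C. C \<in> T ` {1..n} \<and> C - {n+1..2*n} \<noteq> {}}"
    by (rule pmult_via_partition[OF P sub connected])
  also have "\<dots> = (\<lambda>k. (\<lambda>x. if x > 2*n then x - n else x) ` (T k - {n+1..2*n})) ` {1..n}"
    by (rule Setcompr_image_eq) (auto simp: T_def)
  also have "\<dots> = perm_partition n (\<tau> \<circ> \<sigma>)"
    unfolding perm_partition_def
  proof (rule image_cong[OF HOL.refl])
    fix k assume k: "k \<in> {1..n}"
    then have range: "\<sigma> k \<in> {1..n}" "\<tau> (\<sigma> k) \<in> {1..n}"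
      using permutes_in_image[OF \<sigma>] permutes_in_image[OF \<tau>] by auto
    then have "T k - {n+1..2*n} = {k, 2*n + \<tau> (\<sigma> k)}" using k by (auto simp: T_def)
    then show "(\<lambda>x. if x > 2*n then x - n else x) ` (T k - {n+1..2*n}) = {k, n + (\<tau> \<circ> \<sigma>) k}"
      using k range by auto
  qed
  finally show ?thesis .
qed

lemma perm_partition_inj:
  assumes \<sigma>: "\<sigma> permutes {1..n}" and \<tau>: "\<tau> permutes {1..n}"
    and eq: "perm_partition n \<sigma> = perm_partition n \<tau>"
  shows "\<sigma> = \<tau>"
proof
  fix k
  show "\<sigma> k = \<tau> k"
  proof (cases "k \<in> {1..n}")
    case True
    then obtain k' where k': "k' \<in> {1..n}" "{k, n + \<sigma> k} = {k', n + \<tau> k'}"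
      using eq unfolding perm_partition_def by blast
    moreover have "\<sigma> k \<in> {1..n}" "\<tau> k' \<in> {1..n}"
      using True k'(1) permutes_in_image[OF \<sigma>] permutes_in_image[OF \<tau>] by auto
    ultimately show ?thesis using True by (auto simp: doubleton_eq_iff)
  qed (simp add: permutes_not_in[OF \<sigma>] permutes_not_in[OF \<tau>])
qed

definition box_block :: "nat \<Rightarrow> nat set \<Rightarrow> nat \<Rightarrow> nat set" where
  "box_block n S k = {a \<in> {1..n}. joined S a k}"

definition box_partition :: "nat \<Rightarrow> nat set \<Rightarrow> nat set set" where
  "box_partition n S = (\<lambda>k. box_block n S k \<union> (\<lambda>x. x + n) ` box_block n S k) ` {1..n}"

lemma box_block_self: "k \<in> {1..n} \<Longrightarrow> k \<in> box_block n S k"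
  by (simp add: box_block_def)

lemma box_block_subset: "box_block n S k \<subseteq> {1..n}"
  by (auto simp: box_block_def)

lemma box_block_eq: "a \<in> box_block n S k \<Longrightarrow> box_block n S a = box_block n S k"
  unfolding box_block_def by (auto intro: joined_trans simp: joined_commute)

lemma box_block_mono: "S \<subseteq> S' \<Longrightarrow> box_block n S k \<subseteq> box_block n S' k"
  unfolding box_block_def using joined_mono by blast

lemma box_blocks_partition: "partition_on {1..n} (box_block n S ` {1..n})"
proof (rule partition_on_image)
  show "(\<Union>k\<in>{1..n}. box_block n S k) = {1..n}"
    using box_block_self box_block_subset by blast
  show "box_block n S k = box_block n S k'" if "box_block n S k \<inter> box_block n S k' \<noteq> {}" for k k'
    using that box_block_eq by blast
qed (use box_block_self in blast)

lemma box_partition_shifts: "box_partition n S = (\<lambda>B. \<Union>s\<in>{0, n}. (\<lambda>x. x + s) ` B) ` (box_block n S ` {1..n})"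
  unfolding box_partition_def image_image by simp

lemma box_partition_in_pmon: "box_partition n S \<in> pmon n"
proof -
  have "partition_on (\<Union>s\<in>{0, n}. (\<lambda>x. x + s) ` {1..n}) (box_partition n S)"
    unfolding box_partition_shifts by (rule partition_on_shifts[OF box_blocks_partition]) auto
  moreover have "(\<Union>s\<in>{0, n}. (\<lambda>x. x + s) ` {1..n}) = {1..2*n}" by auto
  ultimately show ?thesis by (simp add: pmon_def)
qed

definition box_strand :: "nat \<Rightarrow> nat set \<Rightarrow> nat \<Rightarrow> nat set" where
  "box_strand n U k = (\<Union>s\<in>{0, n, 2*n}. (\<lambda>x. x + s) ` box_block n U k)"

lemma box_strand_self: "k \<in> {1..n} \<Longrightarrow> k \<in> box_strand n U k"
  using box_block_self by (force simp: box_strand_def)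

lemma box_strands_partition: "partition_on {1..3*n} (box_strand n U ` {1..n})"
proof -
  have "partition_on (\<Union>s\<in>{0, n, 2*n}. (\<lambda>x. x + s) ` {1..n})
      ((\<lambda>B. \<Union>s\<in>{0, n, 2*n}. (\<lambda>x. x + s) ` B) ` (box_block n U ` {1..n}))"
    by (rule partition_on_shifts[OF box_blocks_partition]) auto
  moreover have "(\<Union>s\<in>{0, n, 2*n}. (\<lambda>x. x + s) ` {1..n}) = {1..3*n}" by auto
  ultimately show ?thesis by (simp add: image_image box_strand_def)
qed

lemma box_strand_relabel:
  "(\<lambda>x. if x > 2*n then x - n else x) ` (box_strand n U k - {n+1..2*n})
    = box_block n U k \<union> (\<lambda>x. x + n) ` box_block n U k"
proof -
  let ?B = "box_block n U k"
  have "box_strand n U k - {n+1..2*n} = ?B \<union> (\<lambda>x. x + 2*n) ` ?B"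
    using box_block_subset[of n U k] by (auto simp: box_strand_def)
  moreover have "(\<lambda>x. if x > 2*n then x - n else x) ` ?B = id ` ?B"
    using box_block_subset[of n U k] by (intro image_cong) auto
  moreover have "(\<lambda>x. if x > 2*n then x - n else x) ` (\<lambda>x. x + 2*n) ` ?B = (\<lambda>x. x + n) ` ?B"
    unfolding image_image using box_block_subset[of n U k] by (intro image_cong) auto
  ultimately show ?thesis by (simp only: image_Un image_id id_apply)
qed

lemma shift_box_partition:
  "(\<lambda>B. (\<lambda>x. x + n) ` B) ` box_partition n T
    = (\<lambda>k. (\<lambda>x. x + n) ` box_block n T k \<union> (\<lambda>x. x + 2*n) ` box_block n T k) ` {1..n}"
  unfolding box_partition_def image_image
  by (rule image_cong[OF HOL.refl]) (auto simp: image_Un image_image)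

lemma pmult_rel_box_partition_subset:
  "pmult_rel n (box_partition n S) (box_partition n T) \<subseteq> rel_of (box_strand n (S \<union> T) ` {1..n})"
  unfolding pmult_rel_def shift_box_partition unfolding box_partition_def
proof (intro Un_least rel_of_mono)
  fix B assume "B \<in> (\<lambda>k. box_block n S k \<union> (\<lambda>x. x + n) ` box_block n S k) ` {1..n}"
  then obtain k where k: "k \<in> {1..n}" and B: "B = box_block n S k \<union> (\<lambda>x. x + n) ` box_block n S k"
    by blast
  have "B \<subseteq> box_strand n (S \<union> T) k"
    using box_block_mono[of S "S \<union> T" n k] unfolding B box_strand_def by auto
  then show "\<exists>C\<in>box_strand n (S \<union> T) ` {1..n}. B \<subseteq> C" using k by blast
next
  fix B assume "B \<in> (\<lambda>k. (\<lambda>x. x + n) ` box_block n T k \<union> (\<lambda>x. x + 2*n) ` box_block n T k) ` {1..n}"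
  then obtain k where k: "k \<in> {1..n}"
    and B: "B = (\<lambda>x. x + n) ` box_block n T k \<union> (\<lambda>x. x + 2*n) ` box_block n T k"
    by blast
  have "B \<subseteq> box_strand n (S \<union> T) k"
    using box_block_mono[of T "S \<union> T" n k] unfolding B box_strand_def by auto
  then show "\<exists>C\<in>box_strand n (S \<union> T) ` {1..n}. B \<subseteq> C" using k by blast
qed

lemma pmult_rel_box_partitionI:
  assumes "k \<in> {1..n}"
  shows "x \<in> box_block n S k \<union> (\<lambda>x. x + n) ` box_block n S k \<Longrightarrow>
      y \<in> box_block n S k \<union> (\<lambda>x. x + n) ` box_block n S k \<Longrightarrow>
      (x, y) \<in> pmult_rel n (box_partition n S) (box_partition n T)"
    and "x \<in> (\<lambda>x. x + n) ` box_block n T k \<union> (\<lambda>x. x + 2*n) ` box_block n T k \<Longrightarrow>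
      y \<in> (\<lambda>x. x + n) ` box_block n T k \<union> (\<lambda>x. x + 2*n) ` box_block n T k \<Longrightarrow>
      (x, y) \<in> pmult_rel n (box_partition n S) (box_partition n T)"
proof -
  have "box_block n S k \<union> (\<lambda>x. x + n) ` box_block n S k \<in> box_partition n S"
    using assms by (auto simp: box_partition_def)
  then show "x \<in> box_block n S k \<union> (\<lambda>x. x + n) ` box_block n S k \<Longrightarrow>
      y \<in> box_block n S k \<union> (\<lambda>x. x + n) ` box_block n S k \<Longrightarrow>
      (x, y) \<in> pmult_rel n (box_partition n S) (box_partition n T)"
    unfolding pmult_rel_def rel_of_def by blast
  have "(\<lambda>x. x + n) ` box_block n T k \<union> (\<lambda>x. x + 2*n) ` box_block n T k
      \<in> (\<lambda>B. (\<lambda>x. x + n) ` B) ` box_partition n T"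
    using assms unfolding shift_box_partition by blast
  then show "x \<in> (\<lambda>x. x + n) ` box_block n T k \<union> (\<lambda>x. x + 2*n) ` box_block n T k \<Longrightarrow>
      y \<in> (\<lambda>x. x + n) ` box_block n T k \<union> (\<lambda>x. x + 2*n) ` box_block n T k \<Longrightarrow>
      (x, y) \<in> pmult_rel n (box_partition n S) (box_partition n T)"
    unfolding pmult_rel_def rel_of_def by blast
qed

lemma pmult_rel_box_partition_connected:
  assumes S: "S \<subseteq> {1..<n}" and T: "T \<subseteq> {1..<n}"
    and k: "k \<in> {1..n}" and x: "x \<in> box_strand n (S \<union> T) k"
  shows "(k, x) \<in> (pmult_rel n (box_partition n S) (box_partition n T))\<^sup>+"
proof -
  let ?r = "pmult_rel n (box_partition n S) (box_partition n T)"
  have vertical: "(a, a + n) \<in> ?r" "(a + n, a) \<in> ?r" "(a + n, a + 2*n) \<in> ?r" if "a \<in> {1..n}" for a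
    by (rule pmult_rel_box_partitionI[OF that]; use box_block_self[OF that] in blast)+
  have steps: "(t, Suc t) \<in> ?r\<^sup>*" if t: "t \<in> S \<union> T" for t
  proof -
    have t_range: "t \<in> {1..n}" "Suc t \<in> {1..n}" using t S T by auto
    have own_block: "t \<in> box_block n V t" "Suc t \<in> box_block n V t" if "t \<in> V" for V
      using that t_range by (auto simp: box_block_def joined_def)
    show ?thesis
    proof (cases "t \<in> S")
      case True
      have "(t, Suc t) \<in> ?r"
        by (rule pmult_rel_box_partitionI(1)[OF t_range(1)]; use own_block[OF True] in blast)
      then show ?thesis by blast
    next
      case False
      then have "t \<in> T" using t by blast
      have "(t + n, Suc t + n) \<in> ?r"
        by (rule pmult_rel_box_partitionI(2)[OF t_range(1)]; use own_block[OF \<open>t \<in> T\<close>] in blast)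
      then show ?thesis using vertical(1)[OF t_range(1)] vertical(2)[OF t_range(2)]
        by (meson converse_rtrancl_into_rtrancl r_into_rtrancl)
    qed
  qed
  have "sym ?r" unfolding pmult_rel_def by (intro sym_Un) (auto simp: sym_def rel_of_def)
  obtain a where a: "a \<in> box_block n (S \<union> T) k" "x = a \<or> x = a + n \<or> x = a + 2*n"
    using x by (auto simp: box_strand_def)
  have a1: "a \<in> {1..n}" using a(1) box_block_subset by blast
  have "joined (S \<union> T) a k" using a(1) by (simp add: box_block_def)
  then have "(k, a) \<in> ?r\<^sup>*" using joined_rtrancl[OF steps \<open>sym ?r\<close>] joined_commute by blast
  then have "(k, a + n) \<in> ?r\<^sup>+" using vertical(1)[OF a1] by (rule rtrancl_into_trancl1)
  moreover from this have "(k, a) \<in> ?r\<^sup>+" using vertical(2)[OF a1] by (rule trancl_into_trancl)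
  moreover from calculation(1) have "(k, a + 2*n) \<in> ?r\<^sup>+"
    using vertical(3)[OF a1] by (rule trancl_into_trancl)
  ultimately show ?thesis using a(2) by blast
qed

lemma pmult_box_partition:
  assumes S: "S \<subseteq> {1..<n}" and T: "T \<subseteq> {1..<n}"
  shows "pmult n (box_partition n S) (box_partition n T) = box_partition n (S \<union> T)"
proof -
  have connected: "\<forall>B\<in>box_strand n (S \<union> T) ` {1..n}. \<exists>c\<in>B. \<forall>x\<in>B.
      (c, x) \<in> (pmult_rel n (box_partition n S) (box_partition n T))\<^sup>+"
    using pmult_rel_box_partition_connected[OF S T] box_strand_self by blast
  have "pmult n (box_partition n S) (box_partition n T) =
      {(\<lambda>x. if x > 2*n then x - n else x) ` (C - {n+1..2*n}) | C.
         C \<in> box_strand n (S \<union> T) ` {1..n} \<and> C - {n+1..2*n} \<noteq> {}}"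
    by (rule pmult_via_partition[OF box_strands_partition pmult_rel_box_partition_subset connected])
  also have "\<dots> = (\<lambda>k. (\<lambda>x. if x > 2*n then x - n else x) ` (box_strand n (S \<union> T) k - {n+1..2*n})) ` {1..n}"
    by (rule Setcompr_image_eq) (use box_strand_self in force)
  also have "\<dots> = box_partition n (S \<union> T)"
    unfolding box_partition_def box_strand_relabel ..
  finally show ?thesis .
qed

definition adjacent_links :: "nat \<Rightarrow> nat set set \<Rightarrow> nat set" where
  "adjacent_links n J = {i \<in> {1..<n}. \<exists>B\<in>J. i \<in> B \<and> Suc i \<in> B}"

lemma adjacent_links_box_partition:
  assumes "S \<subseteq> {1..<n}"
  shows "adjacent_links n (box_partition n S) = S"
proof -
  have "(\<exists>B\<in>box_partition n S. i \<in> B \<and> Suc i \<in> B) \<longleftrightarrow> i \<in> S" if i: "i \<in> {1..<n}" for i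
  proof
    assume "\<exists>B\<in>box_partition n S. i \<in> B \<and> Suc i \<in> B"
    then obtain k where "i \<in> box_block n S k \<union> (\<lambda>x. x + n) ` box_block n S k"
      "Suc i \<in> box_block n S k \<union> (\<lambda>x. x + n) ` box_block n S k"
      unfolding box_partition_def by blast
    then have "i \<in> box_block n S k" "Suc i \<in> box_block n S k"
      using i box_block_subset[of n S k] by auto
    then have "joined S i (Suc i)" unfolding box_block_def by (metis joined_commute joined_trans mem_Collect_eq)
    then show "i \<in> S" by (simp add: joined_Suc_iff)
  next
    assume "i \<in> S"
    then have "i \<in> box_block n S i" "Suc i \<in> box_block n S i"
      using i by (auto simp: box_block_def joined_def)
    moreover have "box_block n S i \<union> (\<lambda>x. x + n) ` box_block n S i \<in> box_partition n S"
      using i by (auto simp: box_partition_def)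
    ultimately show "\<exists>B\<in>box_partition n S. i \<in> B \<and> Suc i \<in> B" by blast
  qed
  then show ?thesis using assms by (auto simp: adjacent_links_def)
qed

section \<open>Evaluation of words\<close>

lemma one_p_eq: "one_p n = perm_partition n id"
  unfolding one_p_def perm_partition_def by (auto simp: Setcompr_eq_image)

lemma s_p_eq: "s_p n i = perm_partition n (transpose i (Suc i))"
  unfolding s_p_def perm_partition_def transpose_def Suc_eq_plus1 by (simp only: Setcompr_eq_image)

lemma box_partition_empty: "box_partition n {} = perm_partition n id"
proof -
  have "box_block n {} k = {k}" if "k \<in> {1..n}" for k
    using that by (auto simp: box_block_def joined_empty_iff)
  then show ?thesis
    unfolding box_partition_def perm_partition_def by (intro image_cong[OF HOL.refl]) auto
qed

lemma b_p_eq: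
  assumes "1 \<le> i" "i < n"
  shows "b_p n i = box_partition n {i}"
proof -
  let ?pair = "\<lambda>k. {k, n + k}"
  have blocks: "box_block n {i} k = (if k \<in> {i, Suc i} then {i, Suc i} else {k})" if "k \<in> {1..n}" for k
    using that assms by (auto simp: box_block_def joined_singleton_iff doubleton_eq_iff)
  have "{1..n} = {i, Suc i} \<union> ({1..n} - {i, Suc i})" using assms by auto
  then have "box_partition n {i} = (\<lambda>k. box_block n {i} k \<union> (\<lambda>x. x + n) ` box_block n {i} k) `
      ({i, Suc i} \<union> ({1..n} - {i, Suc i}))"
    unfolding box_partition_def by simp
  also have "\<dots> = {{i, i + 1, n + i, n + i + 1}} \<union> ?pair ` ({1..n} - {i, Suc i})"
    unfolding image_Un using assms blocks by (auto simp: insert_commute intro!: image_cong)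
  also have "?pair ` ({1..n} - {i, Suc i}) = one_p n - {{i, n + i}, {i + 1, n + i + 1}}"
  proof -
    have "inj ?pair" by (auto simp: inj_on_def doubleton_eq_iff)
    then have "?pair ` ({1..n} - {i, Suc i}) = ?pair ` {1..n} - ?pair ` {i, Suc i}"
      by (rule image_set_diff)
    then show ?thesis by (simp add: one_p_eq perm_partition_def)
  qed
  finally show ?thesis unfolding b_p_def by (simp only: Un_commute)
qed

lemma eval_word_eq:
  assumes "set w \<subseteq> gens n"
  shows "eval_word n w = (perm_partition n (word_perm w), box_partition n (word_support w))"
  using assms
proof (induction w)
  case Nil
  show ?case by (simp add: one_p_eq box_partition_empty id_def)
next
  case (Cons g w)
  then have w: "set w \<subseteq> gens n" and i: "1 \<le> gen_index g" "gen_index g < n" by (auto simp: gens_iff)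
  then have supp: "word_support w \<subseteq> {1..<n}" by (simp add: words_iff)
  then have perm: "word_perm w permutes {1..n}" by (rule word_perm_permutes)
  have box: "pmult n (b_p n (gen_index g)) (box_partition n (word_support w))
      = box_partition n (word_support (g # w))"
    using pmult_box_partition[of "{gen_index g}" n "word_support w"] i supp by (simp add: b_p_eq)
  show ?case
  proof (cases g)
    case (E i)
    then show ?thesis
      using Cons.IH[OF w] box pmult_perm_partition[OF permutes_id perm] by (simp add: bmult_def one_p_eq)
  next
    case (Z i)
    have "transpose i (Suc i) permutes {1..n}" using i Z by (intro permutes_swap_id) auto
    then show ?thesis
      using Cons.IH[OF w] box pmult_perm_partition[OF _ perm] Z by (simp add: bmult_def s_p_eq comp_def)
  qed
qed

lemma eval_word_eq_iff:
  assumes u: "set u \<subseteq> gens n" and v: "set v \<subseteq> gens n"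
  shows "eval_word n u = eval_word n v \<longleftrightarrow> word_perm u = word_perm v \<and> word_support u = word_support v"
proof -
  have supp: "word_support u \<subseteq> {1..<n}" "word_support v \<subseteq> {1..<n}" using u v by (simp_all add: words_iff)
  have "perm_partition n (word_perm u) = perm_partition n (word_perm v) \<longleftrightarrow> word_perm u = word_perm v"
    using perm_partition_inj[OF word_perm_permutes[OF supp(1)] word_perm_permutes[OF supp(2)]]
    by (rule iffI) simp_all
  moreover have "box_partition n (word_support u) = box_partition n (word_support v)
      \<longleftrightarrow> word_support u = word_support v"
    using adjacent_links_box_partition[OF supp(1)] adjacent_links_box_partition[OF supp(2)] by metis
  ultimately show ?thesis unfolding eval_word_eq[OF u] eval_word_eq[OF v] by simp
qed

section \<open>The elements of BR\<close>

lemma box_block_interval: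
  assumes "k \<in> {1..n}"
  obtains a b where "box_block n S k = {a..b}"
proof -
  let ?B = "box_block n S k"
  have fin: "finite ?B" by (rule finite_subset[OF box_block_subset]) simp
  have ne: "?B \<noteq> {}" using box_block_self[OF assms] by blast
  define a b where "a = Min ?B" and "b = Max ?B"
  have "a \<in> ?B" "b \<in> ?B" using fin ne by (simp_all add: a_def b_def)
  then have ends: "joined S a k" "joined S b k" "1 \<le> a" "b \<le> n"
    unfolding box_block_def by simp_all
  have "{a..b} \<subseteq> ?B"
  proof
    fix y assume "y \<in> {a..b}"
    then have y: "a \<le> y" "y \<le> b" by simp_all
    have "joined S y k" by (rule joined_between[OF ends(1,2) y])
    then show "y \<in> ?B" using y ends(3,4) unfolding box_block_def by simp
  qed
  moreover have "?B \<subseteq> {a..b}" using Min_le[OF fin] Max_ge[OF fin] by (auto simp: a_def b_def)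
  ultimately show ?thesis using that by blast
qed

lemma permutes_box_block:
  assumes \<sigma>: "\<sigma> permutes {1..n}" and joined: "\<forall>k. joined S k (\<sigma> k)"
  shows "\<sigma> ` box_block n S k = box_block n S k"
proof (rule endo_inj_surj)
  show "finite (box_block n S k)" by (rule finite_subset[OF box_block_subset]) simp
  show "inj_on \<sigma> (box_block n S k)" using permutes_inj[OF \<sigma>] inj_on_subset by blast
  show "\<sigma> ` box_block n S k \<subseteq> box_block n S k"
  proof
    fix b assume "b \<in> \<sigma> ` box_block n S k"
    then obtain a where a: "a \<in> box_block n S k" "b = \<sigma> a" by blast
    then have "joined S (\<sigma> a) a" "joined S a k" "\<sigma> a \<in> {1..n}"
      using joined joined_commute permutes_in_image[OF \<sigma>] by (auto simp: box_block_def)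
    then show "b \<in> box_block n S k" using a(2) joined_trans by (auto simp: box_block_def)
  qed
qed

lemma refines_perm_partition_box_partition:
  assumes \<sigma>: "\<sigma> permutes {1..n}" and joined: "\<forall>k. joined S k (\<sigma> k)"
  shows "refines (perm_partition n \<sigma>) (box_partition n S)"
  unfolding refines_def
proof
  fix B assume "B \<in> box_partition n S"
  then obtain k where B: "B = box_block n S k \<union> (\<lambda>x. x + n) ` box_block n S k"
    unfolding box_partition_def by blast
  have "(\<lambda>a. n + \<sigma> a) ` box_block n S k = (\<lambda>x. x + n) ` (\<sigma> ` box_block n S k)"
    by (simp add: image_image add.commute)
  also have "\<dots> = (\<lambda>x. x + n) ` box_block n S k" by (simp only: permutes_box_block[OF assms])
  finally have "B = (\<Union>a\<in>box_block n S k. {a, n + \<sigma> a})" unfolding B by blast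
  moreover have "(\<lambda>a. {a, n + \<sigma> a}) ` box_block n S k \<subseteq> perm_partition n \<sigma>"
    unfolding perm_partition_def using box_block_subset by (rule image_mono)
  ultimately show "\<exists>X\<subseteq>perm_partition n \<sigma>. B = \<Union>X" by blast
qed

lemma perm_box_in_BR:
  assumes \<sigma>: "\<sigma> permutes {1..n}" and S: "S \<subseteq> {1..<n}" and joined: "\<forall>k. joined S k (\<sigma> k)"
  shows "(perm_partition n \<sigma>, box_partition n S) \<in> BR n"
proof -
  have "perm_partition n \<sigma> \<in> sym_part n"
    using perm_partition_in_pmon[OF \<sigma>] permutes_in_image[OF \<sigma>]
    unfolding sym_part_def perm_partition_def by blast
  moreover have "refines (one_p n) (box_partition n S)"
    using refines_perm_partition_box_partition[of id n S] by (simp add: one_p_eq)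
  moreover have "linear_part (restrict_part (box_partition n S) {1..n})"
    unfolding linear_part_def restrict_part_def
  proof (intro ballI)
    fix A assume "A \<in> {B \<inter> {1..n} |B. B \<in> box_partition n S \<and> B \<inter> {1..n} \<noteq> {}}"
    then obtain k where k: "k \<in> {1..n}" "A = (box_block n S k \<union> (\<lambda>x. x + n) ` box_block n S k) \<inter> {1..n}"
      unfolding box_partition_def by blast
    then have "A = box_block n S k" using box_block_subset[of n S k] by auto
    then show "\<exists>a b. A = {a..b}" by (metis box_block_interval[OF k(1)])
  qed
  ultimately show ?thesis
    using box_partition_in_pmon refines_perm_partition_box_partition[OF assms(1,3)]
    unfolding BR_def boxed_def by blast
qed

lemma refines_perm_partition_box_partitionD:
  assumes \<sigma>: "\<sigma> permutes {1..n}" and R: "refines (perm_partition n \<sigma>) (box_partition n S)"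
  shows "joined S k (\<sigma> k)"
proof (cases "k \<in> {1..n}")
  case True
  let ?Bk = "box_block n S k \<union> (\<lambda>x. x + n) ` box_block n S k"
  have "?Bk \<in> box_partition n S" using True unfolding box_partition_def by blast
  then obtain X where "X \<subseteq> perm_partition n \<sigma>" "?Bk = \<Union>X" using R unfolding refines_def by blast
  moreover have "k \<in> ?Bk" using box_block_self[OF True] by blast
  ultimately obtain C where C: "C \<in> perm_partition n \<sigma>" "k \<in> C" "C \<subseteq> ?Bk" by blast
  moreover obtain k' where k': "k' \<in> {1..n}" "C = {k', n + \<sigma> k'}"
    using C(1) unfolding perm_partition_def by blast
  moreover have "\<sigma> k' \<in> {1..n}" using permutes_in_image[OF \<sigma>] k'(1) by simp
  ultimately have "n + \<sigma> k \<in> ?Bk" using True by auto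
  then have "\<sigma> k \<in> box_block n S k"
    using box_block_subset[of n S k] permutes_in_image[OF \<sigma>, of k] True by (auto simp: add.commute)
  then show ?thesis by (simp add: box_block_def joined_commute)
qed (simp add: permutes_not_in[OF \<sigma>])

lemma sym_part_partner:
  assumes I: "I \<in> sym_part n" and k: "k \<in> {1..n}"
  shows "\<exists>!j. j \<in> {1..n} \<and> {k, n + j} \<in> I"
proof -
  have P: "partition_on {1..2*n} I"
    and blocks: "\<forall>B\<in>I. \<exists>i j. i \<in> {1..n} \<and> j \<in> {1..n} \<and> B = {i, n + j}"
    using I by (auto simp: sym_part_def pmon_def)
  have "k \<in> \<Union>I" using partition_onD1[OF P] k by auto
  then obtain B where B: "B \<in> I" "k \<in> B" by blast
  then obtain i j where ij: "i \<in> {1..n}" "j \<in> {1..n}" "B = {i, n + j}" using blocks by blast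
  then have "{k, n + j} \<in> I" using B k by auto
  moreover have "j' = j" if "j' \<in> {1..n}" "{k, n + j'} \<in> I" for j'
    using partition_on_block_unique[OF P that(2) \<open>{k, n + j} \<in> I\<close>] that(1) k ij(2)
    by (auto simp: doubleton_eq_iff)
  ultimately show ?thesis using ij(2) by blast
qed

lemma sym_part_eq_perm_partition:
  assumes I: "I \<in> sym_part n"
  obtains \<sigma> where "\<sigma> permutes {1..n}" "I = perm_partition n \<sigma>"
proof -
  have P: "partition_on {1..2*n} I"
    and blocks: "\<forall>B\<in>I. \<exists>i j. i \<in> {1..n} \<and> j \<in> {1..n} \<and> B = {i, n + j}"
    using I by (auto simp: sym_part_def pmon_def)
  define \<sigma> where "\<sigma> k = (if k \<in> {1..n} then THE j. j \<in> {1..n} \<and> {k, n + j} \<in> I else k)" for k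
  have \<sigma>: "\<sigma> k \<in> {1..n}" "{k, n + \<sigma> k} \<in> I" if "k \<in> {1..n}" for k
    using theI'[OF sym_part_partner[OF I that]] that by (simp_all add: \<sigma>_def)
  have "inj_on \<sigma> {1..n}"
  proof (rule inj_onI)
    fix a b assume ab: "a \<in> {1..n}" "b \<in> {1..n}" "\<sigma> a = \<sigma> b"
    then have "{a, n + \<sigma> a} = {b, n + \<sigma> b}"
      using partition_on_block_unique[OF P \<sigma>(2)[OF ab(1)] \<sigma>(2)[OF ab(2)], of "n + \<sigma> a"] by simp
    then show "a = b" using ab \<sigma>(1)[OF ab(1)] by (auto simp: doubleton_eq_iff)
  qed
  then have perm: "\<sigma> permutes {1..n}" using \<sigma>(1) by (intro inj_imp_permutes) (auto simp: \<sigma>_def)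
  have "I = perm_partition n \<sigma>"
  proof
    show "perm_partition n \<sigma> \<subseteq> I" using \<sigma>(2) unfolding perm_partition_def by blast
    show "I \<subseteq> perm_partition n \<sigma>"
    proof
      fix B assume "B \<in> I"
      then obtain i j where ij: "i \<in> {1..n}" "j \<in> {1..n}" "B = {i, n + j}" using blocks by blast
      then have "\<sigma> i = j" using sym_part_partner[OF I ij(1)] \<sigma>[OF ij(1)] \<open>B \<in> I\<close> by blast
      then show "B \<in> perm_partition n \<sigma>" using ij unfolding perm_partition_def by blast
    qed
  qed
  with perm show ?thesis using that by blast
qed

lemma refines_one_p_block:
  assumes "refines (one_p n) J" "B \<in> J" "x \<in> B"
  obtains a where "a \<in> {1..n}" "x \<in> {a, n + a}" "{a, n + a} \<subseteq> B"
proof -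
  obtain X where X: "X \<subseteq> one_p n" "B = \<Union>X" using assms(1,2) unfolding refines_def by blast
  then obtain C where "C \<in> X" "x \<in> C" using assms(3) by blast
  then show ?thesis using that X unfolding one_p_def by blast
qed

lemma refines_one_p_block_eq:
  assumes "refines (one_p n) J" "B \<in> J"
  shows "B = (B \<inter> {1..n}) \<union> (\<lambda>x. x + n) ` (B \<inter> {1..n})"
proof
  show "B \<subseteq> (B \<inter> {1..n}) \<union> (\<lambda>x. x + n) ` (B \<inter> {1..n})"
  proof
    fix x assume "x \<in> B"
    then obtain a where "a \<in> {1..n}" "x \<in> {a, n + a}" "{a, n + a} \<subseteq> B"
      using refines_one_p_block[OF assms] by blast
    then show "x \<in> (B \<inter> {1..n}) \<union> (\<lambda>x. x + n) ` (B \<inter> {1..n})" by (auto simp: add.commute)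
  qed
  show "(B \<inter> {1..n}) \<union> (\<lambda>x. x + n) ` (B \<inter> {1..n}) \<subseteq> B"
  proof (intro Un_least image_subsetI)
    fix x assume x: "x \<in> B \<inter> {1..n}"
    then obtain a where "a \<in> {1..n}" "x \<in> {a, n + a}" "{a, n + a} \<subseteq> B"
      using refines_one_p_block[OF assms] by blast
    then show "x + n \<in> B" using x by (auto simp: add.commute)
  qed blast
qed

lemma adjacent_links_joined:
  assumes P: "partition_on A J" and B: "B \<in> J" "k \<in> B" and "joined (adjacent_links n J) k x"
  shows "x \<in> B"
proof -
  have "(t, Suc t) \<in> (rel_of J)\<^sup>*" if "t \<in> adjacent_links n J" for t
    using that unfolding adjacent_links_def rel_of_def by blast
  moreover have "sym (rel_of J)" by (auto simp: sym_def rel_of_def)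
  ultimately have "(k, x) \<in> (rel_of J)\<^sup>*" using assms(4) by (rule joined_rtrancl)
  moreover have "trans (rel_of J)"
    using equiv_partition_on[OF P] by (simp add: rel_of_eq equiv_def)
  ultimately have "k = x \<or> (k, x) \<in> rel_of J" by (metis rtranclD trancl_id)
  then show "x \<in> B" using B partition_on_block_unique[OF P] unfolding rel_of_def by blast
qed

lemma boxed_top_block:
  assumes J: "boxed n J" and B: "B \<in> J" "k \<in> B" "k \<in> {1..n}"
  shows "B \<inter> {1..n} = box_block n (adjacent_links n J) k"
proof
  let ?L = "adjacent_links n J"
  have P: "partition_on {1..2*n} J" and lin: "linear_part (restrict_part J {1..n})"
    using J by (auto simp: boxed_def pmon_def)
  show "B \<inter> {1..n} \<subseteq> box_block n ?L k"
  proof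
    fix x assume x: "x \<in> B \<inter> {1..n}"
    have "B \<inter> {1..n} \<in> restrict_part J {1..n}" unfolding restrict_part_def using B by blast
    then obtain a b where ab: "B \<inter> {1..n} = {a..b}" using lin unfolding linear_part_def by blast
    have "x \<in> {a..b}" "k \<in> {a..b}" using x B unfolding ab[symmetric] by auto
    have "{min x k..<max x k} \<subseteq> ?L"
    proof
      fix t assume t: "t \<in> {min x k..<max x k}"
      have "t \<in> {a..b}" "Suc t \<in> {a..b}" using t \<open>x \<in> {a..b}\<close> \<open>k \<in> {a..b}\<close> by auto
      then have "t \<in> B \<inter> {1..n}" "Suc t \<in> B \<inter> {1..n}" unfolding ab .
      then show "t \<in> ?L" unfolding adjacent_links_def using B(1) by auto
    qed
    then show "x \<in> box_block n ?L k" using x by (simp add: box_block_def joined_def)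
  qed
  show "box_block n ?L k \<subseteq> B \<inter> {1..n}"
  proof
    fix x assume x: "x \<in> box_block n ?L k"
    then have "joined ?L k x" by (simp add: box_block_def joined_commute)
    then have "x \<in> B" by (rule adjacent_links_joined[OF P B(1,2)])
    then show "x \<in> B \<inter> {1..n}" using x box_block_subset by blast
  qed
qed

lemma boxed_eq_box_partition:
  assumes J: "boxed n J"
  shows "J = box_partition n (adjacent_links n J)"
proof (rule partition_on_subset_eq)
  let ?L = "adjacent_links n J"
  have P: "partition_on {1..2*n} J" and R: "refines (one_p n) J" using J by (auto simp: boxed_def pmon_def)
  show "partition_on {1..2*n} J" by (rule P)
  show "partition_on {1..2*n} (box_partition n ?L)" using box_partition_in_pmon by (simp add: pmon_def)
  show "J \<subseteq> box_partition n ?L"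
  proof
    fix B assume B: "B \<in> J"
    have B_eq: "B = (B \<inter> {1..n}) \<union> (\<lambda>x. x + n) ` (B \<inter> {1..n})" by (rule refines_one_p_block_eq[OF R B])
    moreover have "B \<noteq> {}" using partition_onD3[OF P] B by blast
    ultimately obtain k where k: "k \<in> B" "k \<in> {1..n}" by blast
    show "B \<in> box_partition n ?L"
      using B_eq boxed_top_block[OF J B k] k(2) unfolding box_partition_def by auto
  qed
qed

lemma BR_eq:
  "BR n = {(perm_partition n \<sigma>, box_partition n S) | \<sigma> S.
            \<sigma> permutes {1..n} \<and> S \<subseteq> {1..<n} \<and> (\<forall>k. joined S k (\<sigma> k))}"
proof
  show "{(perm_partition n \<sigma>, box_partition n S) | \<sigma> S.
      \<sigma> permutes {1..n} \<and> S \<subseteq> {1..<n} \<and> (\<forall>k. joined S k (\<sigma> k))} \<subseteq> BR n"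
    using perm_box_in_BR by blast
  show "BR n \<subseteq> {(perm_partition n \<sigma>, box_partition n S) | \<sigma> S.
      \<sigma> permutes {1..n} \<and> S \<subseteq> {1..<n} \<and> (\<forall>k. joined S k (\<sigma> k))}"
  proof
    fix x assume "x \<in> BR n"
    then obtain I J where x: "x = (I, J)" and I: "I \<in> sym_part n" and J: "boxed n J"
      and R: "refines I J"
      by (auto simp: BR_def)
    obtain \<sigma> where \<sigma>: "\<sigma> permutes {1..n}" and I_eq: "I = perm_partition n \<sigma>"
      using sym_part_eq_perm_partition[OF I] by blast
    define S where "S = adjacent_links n J"
    have J_eq: "J = box_partition n S" unfolding S_def by (rule boxed_eq_box_partition[OF J])
    have "\<forall>k. joined S k (\<sigma> k)"
      using refines_perm_partition_box_partitionD[OF \<sigma>] R unfolding I_eq J_eq by blast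
    moreover have "S \<subseteq> {1..<n}" by (auto simp: S_def adjacent_links_def)
    ultimately show "x \<in> {(perm_partition n \<sigma>, box_partition n S) | \<sigma> S.
        \<sigma> permutes {1..n} \<and> S \<subseteq> {1..<n} \<and> (\<forall>k. joined S k (\<sigma> k))}"
      using x I_eq J_eq \<sigma> by blast
  qed
qed

lemma eval_word_image: "eval_word n ` {w. set w \<subseteq> gens n} = BR n"
proof
  show "eval_word n ` {w. set w \<subseteq> gens n} \<subseteq> BR n"
  proof (rule image_subsetI)
    fix w assume "w \<in> {w. set w \<subseteq> gens n}"
    then have w: "set w \<subseteq> gens n" by simp
    then have supp: "word_support w \<subseteq> {1..<n}" by (simp add: words_iff)
    have "(perm_partition n (word_perm w), box_partition n (word_support w)) \<in> BR n"
      by (rule perm_box_in_BR[OF word_perm_permutes[OF supp] supp]) (simp add: joined_word_perm)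
    then show "eval_word n w \<in> BR n" by (simp add: eval_word_eq[OF w])
  qed
  show "BR n \<subseteq> eval_word n ` {w. set w \<subseteq> gens n}"
  proof
    fix x assume "x \<in> BR n"
    then obtain \<sigma> S where x: "x = (perm_partition n \<sigma>, box_partition n S)"
      and \<sigma>: "\<sigma> permutes {1..n}" "S \<subseteq> {1..<n}" "\<forall>k. joined S k (\<sigma> k)"
      unfolding BR_eq by blast
    obtain w where w: "set w \<subseteq> gens n" "word_perm w = \<sigma>" "word_support w = S"
      using ex_word[OF \<sigma>] .
    then have "eval_word n w = x" using x by (simp add: eval_word_eq)
    then show "x \<in> eval_word n ` {w. set w \<subseteq> gens n}" using w(1) by blast
  qed
qed

theorem theorem5p13:
  fixes n :: nat
  shows "eval_word n ` {w. set w \<subseteq> gens n} = BR n \<and>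
         (\<forall>u v. set u \<subseteq> gens n \<longrightarrow> set v \<subseteq> gens n \<longrightarrow>
            (eval_word n u = eval_word n v \<longleftrightarrow> wcong (rels n) u v))"
proof (intro conjI allI impI)
  show "eval_word n ` {w. set w \<subseteq> gens n} = BR n" by (rule eval_word_image)
next
  fix u v assume "set u \<subseteq> gens n" "set v \<subseteq> gens n"
  then show "eval_word n u = eval_word n v \<longleftrightarrow> wcong (rels n) u v"
    by (simp add: eval_word_eq_iff rcong_iff_invariants)
qed

end
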